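(* For each $n\in\mathbb N$, $$1\le\liminf_{x\to+\infty}\frac{\mathbb P^T_n(x)}{\mathrm{Diag}\,\mathbb P(x)}\le\limsup_{x\to+\infty}\frac{\mathbb P^T_n(x)}{\mathrm{Diag}\,\mathbb P(x)}\le2.$$ In particular, $\mathrm{Diag}\,\mathbb P(x)=\Theta\left(\mathbb P^T_n(x)\right)$ as $x\to+\infty$.
   Context: Let $p_n$ denote the $n$-th prime number. Define $p^{(0)}_n=n$ and recursively $p^{(k+1)}_n=p_{p^{(k)}_n}$ for $k\in\mathbb N_0$. Let $\mathbb P^T_n=\{p^{(k)}_n:k\in\mathbb N\}$ and $\mathrm{Diag}\,\mathbb P=\{p^{(k)}_k:k\in\mathbb N\}$. For $A\subset\mathbb N$ and $x\ge1$, $A(x)=\#\{a\le x:a\in A\}$. *)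

theory Defs
  imports "HOL-Analysis.Analysis" "HOL-Computational_Algebra.Primes" "HOL-Library.Landau_Symbols"
begin

text \<open>The n-th prime p_n, 1-indexed: nth_prime 1 = 2, nth_prime 2 = 3, ...
  (the value at 0 is irrelevant and never used).\<close>
definition nth_prime :: "nat \<Rightarrow> nat" where
  "nth_prime n = enumerate {p::nat. prime p} (n - 1)"

definition iter_prime :: "nat \<Rightarrow> nat \<Rightarrow> nat" where
  "iter_prime k n = (nth_prime ^^ k) n"

definition PT :: "nat \<Rightarrow> nat set" where
  "PT n = {iter_prime k n | k. k \<ge> 1}"

definition DiagP :: "nat set" where
  "DiagP = {iter_prime k k | k. k \<ge> 1}"

definition count_le :: "nat set \<Rightarrow> real \<Rightarrow> nat" where
  "count_le A x = card {a \<in> A. real a \<le> x}"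

end

theory Submission
  imports Defs
begin

text \<open>Since k \<mapsto> p^(k)_n and k \<mapsto> p^(k)_k are strictly increasing, both counting functions
  count indices k \<ge> 1. For k \<ge> n we have p^(k)_n \<le> p^(k)_k, so Diag P(x) \<le> P^T_n(x) + n.
  Conversely p_m > m gives p^(j)_j \<le> p^(j)_(p^(j)_n) = p^(2j)_n, so whenever P^T_n counts an
  index k, Diag P counts k div 2 unless it is 0; hence P^T_n(x) \<le> 2 Diag P(x) + 2. As Diag P(x)
  tends to infinity, the additive constants vanish in the ratio.\<close>

lemma Liminf_ratio_ge_1:
  fixes f g :: "'a \<Rightarrow> real"
  assumes "F \<noteq> bot" and g_lim: "filterlim g at_top F"
    and "eventually (\<lambda>x. g x \<le> f x + a) F"
  shows "1 \<le> Liminf F (\<lambda>x. ereal (f x / g x))"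
proof -
  have "((\<lambda>x. a / g x) \<longlongrightarrow> 0) F"
    by (rule tendsto_divide_0[OF tendsto_const filterlim_at_top_imp_at_infinity[OF g_lim]])
  then have "((\<lambda>x. ereal (1 - a / g x)) \<longlongrightarrow> ereal 1) F"
    unfolding lim_ereal by (auto intro: tendsto_eq_intros)
  then have "Liminf F (\<lambda>x. ereal (1 - a / g x)) = 1"
    unfolding one_ereal_def by (rule lim_imp_Liminf[OF \<open>F \<noteq> bot\<close>])
  moreover have "eventually (\<lambda>x. ereal (1 - a / g x) \<le> ereal (f x / g x)) F"
    using assms(3) filterlim_at_top_dense[THEN iffD1, OF g_lim, rule_format, of 0]
    by eventually_elim (simp add: divide_simps)
  ultimately show ?thesis
    using Liminf_mono by metis
qed

lemma Limsup_ratio_le: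
  fixes f g :: "'a \<Rightarrow> real"
  assumes "F \<noteq> bot" and g_lim: "filterlim g at_top F"
    and "eventually (\<lambda>x. f x \<le> b * g x + c) F"
  shows "Limsup F (\<lambda>x. ereal (f x / g x)) \<le> b"
proof -
  have "((\<lambda>x. c / g x) \<longlongrightarrow> 0) F"
    by (rule tendsto_divide_0[OF tendsto_const filterlim_at_top_imp_at_infinity[OF g_lim]])
  then have "((\<lambda>x. ereal (b + c / g x)) \<longlongrightarrow> ereal b) F"
    unfolding lim_ereal by (auto intro: tendsto_eq_intros)
  then have "Limsup F (\<lambda>x. ereal (b + c / g x)) = b"
    by (rule lim_imp_Limsup[OF \<open>F \<noteq> bot\<close>])
  moreover have "eventually (\<lambda>x. ereal (f x / g x) \<le> ereal (b + c / g x)) F"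
    using assms(3) filterlim_at_top_dense[THEN iffD1, OF g_lim, rule_format, of 0]
    by eventually_elim (simp add: divide_simps)
  ultimately show ?thesis
    using Limsup_mono by metis
qed

lemma bigtheta_of_affine_bounds:
  fixes f g :: "'a \<Rightarrow> real"
  assumes g_lim: "filterlim g at_top F"
    and "eventually (\<lambda>x. g x \<le> f x + a) F" and "eventually (\<lambda>x. f x \<le> b * g x + c) F"
  shows "g \<in> \<Theta>[F](f)"
proof (rule bigthetaI'[of "1 / (\<bar>b\<bar> + \<bar>c\<bar> + 1)" 2])
  have "eventually (\<lambda>x. max 1 (2 * a) \<le> g x) F"
    using g_lim unfolding filterlim_at_top by blast
  then show "eventually (\<lambda>x. 1 / (\<bar>b\<bar> + \<bar>c\<bar> + 1) * norm (f x) \<le> norm (g x)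
      \<and> norm (g x) \<le> 2 * norm (f x)) F"
    using assms(2,3)
  proof eventually_elim
    case (elim x)
    have "b * g x \<le> \<bar>b\<bar> * g x"
      using elim by (intro mult_right_mono) auto
    moreover have "c \<le> \<bar>c\<bar> * g x"
      using elim mult_left_mono[of 1 "g x" "\<bar>c\<bar>"] by linarith
    ultimately have "f x \<le> \<bar>b\<bar> * g x + \<bar>c\<bar> * g x + g x"
      using elim by linarith
    then have "f x \<le> (\<bar>b\<bar> + \<bar>c\<bar> + 1) * g x"
      by (simp add: algebra_simps)
    then show ?case
      using elim by (simp add: field_simps)
  qed
qed auto

definition indices_le :: "(nat \<Rightarrow> nat) \<Rightarrow> real \<Rightarrow> nat set" where
  "indices_le f x = {k. 1 \<le> k \<and> real (f k) \<le> x}"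

lemma finite_indices_le:
  assumes "strict_mono f"
  shows "finite (indices_le f x)"
proof (rule finite_subset)
  show "indices_le f x \<subseteq> {..nat \<lceil>x\<rceil>}"
  proof
    fix k assume "k \<in> indices_le f x"
    then have "real k \<le> x"
      using strict_mono_imp_increasing[OF assms, of k] unfolding indices_le_def by simp
    then show "k \<in> {..nat \<lceil>x\<rceil>}"
      by simp linarith
  qed
qed simp

lemma count_le_strict_mono_image:
  assumes "strict_mono f"
  shows "count_le {f k |k. k \<ge> 1} x = card (indices_le f x)"
proof -
  have "{a \<in> {f k |k. k \<ge> 1}. real a \<le> x} = f ` indices_le f x"
    unfolding indices_le_def by auto
  moreover have "inj_on f (indices_le f x)"
    using strict_mono_imp_inj_on[OF assms] subset_UNIV by (rule inj_on_subset)
  ultimately show ?thesis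
    unfolding count_le_def by (simp add: card_image)
qed

lemma card_indices_le_le_add:
  assumes "strict_mono f" and "\<And>k. n \<le> k \<Longrightarrow> f k \<le> g k"
  shows "card (indices_le g x) \<le> card (indices_le f x) + n"
proof -
  have "indices_le g x \<subseteq> indices_le f x \<union> {..<n}"
    using assms(2) unfolding indices_le_def by (force simp: not_less)
  then have "card (indices_le g x) \<le> card (indices_le f x \<union> {..<n})"
    by (intro card_mono) (simp_all add: finite_indices_le[OF assms(1)])
  also have "\<dots> \<le> card (indices_le f x) + n"
    using card_Un_le[of "indices_le f x" "{..<n}"] by simp
  finally show ?thesis .
qed

lemma card_indices_le_le_double:
  assumes "strict_mono g" and "mono f" and "\<And>j. g j \<le> f (2 * j)"
  shows "card (indices_le f x) \<le> 2 * card (indices_le g x) + 2"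
proof -
  let ?J = "insert 0 (indices_le g x)"
  have "indices_le f x \<subseteq> (\<lambda>(j, r). 2 * j + r) ` (?J \<times> {..<2})"
  proof
    fix k assume k: "k \<in> indices_le f x"
    have "k div 2 \<in> ?J"
    proof (cases "k div 2 = 0")
      case False
      have "g (k div 2) \<le> f (2 * (k div 2))" by (fact assms(3))
      also have "\<dots> \<le> f k" by (intro monoD[OF assms(2)]) simp
      finally show ?thesis using k False unfolding indices_le_def by auto
    qed simp
    then show "k \<in> (\<lambda>(j, r). 2 * j + r) ` (?J \<times> {..<2})"
      by (intro image_eqI[of _ _ "(k div 2, k mod 2)"]) auto
  qed
  then have "card (indices_le f x) \<le> card ((\<lambda>(j, r). 2 * j + r) ` (?J \<times> {..<2::nat}))"
    by (intro card_mono) (simp_all add: finite_indices_le[OF assms(1)])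
  also have "\<dots> \<le> card ?J * 2"
    using card_image_le[of "?J \<times> {..<2::nat}"] finite_indices_le[OF assms(1)]
    by (simp add: card_cartesian_product)
  also have "\<dots> \<le> 2 * card (indices_le g x) + 2"
    by (simp add: card_insert_if finite_indices_le[OF assms(1)])
  finally show ?thesis .
qed

lemma filterlim_card_indices_le:
  assumes "strict_mono f"
  shows "filterlim (\<lambda>x. real (card (indices_le f x))) at_top at_top"
  unfolding filterlim_at_top
proof
  fix Z :: real
  define M where "M = nat \<lceil>Z\<rceil>"
  show "eventually (\<lambda>x. Z \<le> real (card (indices_le f x))) at_top"
    using eventually_ge_at_top[of "real (f M)"]
  proof eventually_elim
    case (elim x)
    have "{1..M} \<subseteq> indices_le f x"
    proof
      fix k assume "k \<in> {1..M}"
      then have "f k \<le> f M"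
        using strict_mono_less_eq[OF assms] by simp
      then show "k \<in> indices_le f x"
        using elim \<open>k \<in> {1..M}\<close> unfolding indices_le_def by simp
    qed
    then have "card {1..M} \<le> card (indices_le f x)"
      by (rule card_mono[OF finite_indices_le[OF assms]])
    then have "real M \<le> real (card (indices_le f x))"
      by simp
    then show ?case
      using real_nat_ceiling_ge[of Z] unfolding M_def by linarith
  qed
qed

lemma nth_prime_gt: "m < nth_prime m"
proof -
  have "j + 2 \<le> enumerate {p::nat. prime p} j" for j
  proof (induction j)
    case 0
    have "prime (enumerate {p::nat. prime p} 0)"
      using enumerate_in_set[OF primes_infinite] by simp
    then have "2 \<le> enumerate {p::nat. prime p} 0"
      by (rule prime_ge_2_nat)
    then show ?case by simp
  next
    case (Suc j)
    then show ?case
      using enumerate_step[OF primes_infinite, of j] by simp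
  qed
  from this[of "m - 1"] show ?thesis
    unfolding nth_prime_def by linarith
qed

lemma mono_nth_prime: "mono nth_prime"
  unfolding nth_prime_def mono_def using primes_infinite by (simp add: diff_le_mono)

lemma iter_prime_Suc: "iter_prime (Suc k) n = nth_prime (iter_prime k n)"
  by (simp add: iter_prime_def)

lemma iter_prime_add: "iter_prime (j + k) n = iter_prime j (iter_prime k n)"
  by (simp add: iter_prime_def funpow_add)

lemma mono_iter_prime: "mono (iter_prime k)"
  unfolding iter_prime_def by (intro mono_pow mono_nth_prime)

lemma strict_mono_iter_prime: "strict_mono (\<lambda>k. iter_prime k n)"
  by (rule strict_mono_Suc_iff[THEN iffD2]) (simp add: iter_prime_Suc nth_prime_gt)

lemma strict_mono_iter_prime_diag: "strict_mono (\<lambda>k. iter_prime k k)"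
proof (rule strict_mono_Suc_iff[THEN iffD2], intro allI)
  fix k
  have "iter_prime k k < iter_prime (Suc k) k"
    by (simp add: iter_prime_Suc nth_prime_gt)
  also have "\<dots> \<le> iter_prime (Suc k) (Suc k)"
    by (intro monoD[OF mono_iter_prime]) simp
  finally show "iter_prime k k < iter_prime (Suc k) (Suc k)" .
qed

lemma iter_prime_diag_le_double: "iter_prime j j \<le> iter_prime (2 * j) n"
proof -
  have "iter_prime j j \<le> iter_prime j (iter_prime j n)"
    using strict_mono_imp_increasing[OF strict_mono_iter_prime]
    by (intro monoD[OF mono_iter_prime])
  also have "\<dots> = iter_prime (2 * j) n"
    by (simp add: mult_2 iter_prime_add)
  finally show ?thesis .
qed

lemma count_le_PT: "count_le (PT n) x = card (indices_le (\<lambda>k. iter_prime k n) x)"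
  unfolding PT_def by (rule count_le_strict_mono_image[OF strict_mono_iter_prime])

lemma count_le_DiagP: "count_le DiagP x = card (indices_le (\<lambda>k. iter_prime k k) x)"
  unfolding DiagP_def by (rule count_le_strict_mono_image[OF strict_mono_iter_prime_diag])

lemma count_le_DiagP_le_PT: "count_le DiagP x \<le> count_le (PT n) x + n"
  unfolding count_le_PT count_le_DiagP
  by (rule card_indices_le_le_add[OF strict_mono_iter_prime], rule monoD[OF mono_iter_prime])

lemma count_le_PT_le_DiagP: "count_le (PT n) x \<le> 2 * count_le DiagP x + 2"
  unfolding count_le_PT count_le_DiagP
  by (rule card_indices_le_le_double[OF strict_mono_iter_prime_diag
        strict_mono_mono[OF strict_mono_iter_prime] iter_prime_diag_le_double])

lemma filterlim_count_le_DiagP: "filterlim (\<lambda>x. real (count_le DiagP x)) at_top at_top"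
  unfolding count_le_DiagP by (rule filterlim_card_indices_le[OF strict_mono_iter_prime_diag])

theorem theorem17:
  fixes n :: nat
  assumes "n \<ge> 1"
  shows "1 \<le> Liminf at_top (\<lambda>x::real. ereal (real (count_le (PT n) x) / real (count_le DiagP x)))
       \<and> Liminf at_top (\<lambda>x::real. ereal (real (count_le (PT n) x) / real (count_le DiagP x)))
           \<le> Limsup at_top (\<lambda>x::real. ereal (real (count_le (PT n) x) / real (count_le DiagP x)))
       \<and> Limsup at_top (\<lambda>x::real. ereal (real (count_le (PT n) x) / real (count_le DiagP x))) \<le> 2
       \<and> (\<lambda>x::real. real (count_le DiagP x)) \<in> \<Theta>(\<lambda>x::real. real (count_le (PT n) x))"
proof -
  let ?P = "\<lambda>x. real (count_le (PT n) x)" and ?D = "\<lambda>x. real (count_le DiagP x)"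
  have D_le: "eventually (\<lambda>x. ?D x \<le> ?P x + n) at_top"
    using count_le_DiagP_le_PT[of _ n, THEN of_nat_mono[where 'a=real]] by simp
  have P_le: "eventually (\<lambda>x. ?P x \<le> 2 * ?D x + 2) at_top"
    using count_le_PT_le_DiagP[of n, THEN of_nat_mono[where 'a=real]] by (simp add: add.commute)
  show ?thesis
    using Liminf_ratio_ge_1[OF _ filterlim_count_le_DiagP D_le]
      Limsup_ratio_le[OF _ filterlim_count_le_DiagP P_le]
      Liminf_le_Limsup[OF trivial_limit_at_top_linorder]
      bigtheta_of_affine_bounds[OF filterlim_count_le_DiagP D_le P_le]
    by simp
qed

end
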